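(* Let $\mathcal{H}$ be a complex Hilbert space, let $A\in\mathcal{B}(\mathcal{H})$ be a nonzero positive operator, and let $\mathbb{A}=\begin{pmatrix}A&O\\O&A\end{pmatrix}$ on $\mathcal{H}\oplus\mathcal{H}$. Let $P,Q,R,S\in\mathcal{B}_A(\mathcal{H})$. Then $$\omega_{\mathbb{A}}\left[\begin{pmatrix}P&Q\\R&S\end{pmatrix}\right]\geq\frac12\max\{\mu,\nu\},$$ where $\mu=\max\{\omega_A(Q+R+S+P),\ \omega_A(Q+R-S-P)\}$ and $\nu=\max\{\omega_A(Q-R+i(S+P)),\ \omega_A(Q-R-i(S+P))\}$.
   Context: For a positive operator $A$ on $\mathcal{H}$, $\langle x,y\rangle_A:=\langle Ax,y\rangle$ and $\|x\|_A:=\sqrt{\langle x,x\rangle_A}$. $\mathcal{B}_A(\mathcal{H})$ is the set of $T\in\mathcal{B}(\mathcal{H})$ with $\mathcal{R}(T^*A)\subseteq\mathcal{R}(A)$. $\omega_A(T):=\sup\{|\langle Tx,x\rangle_A|:x\in\mathcal{H},\|x\|_A=1\}$. $\omega_{\mathbb{A}}$ is defined analogously on $\mathcal{H}\oplus\mathcal{H}$ with $\langle (x_1,x_2),(y_1,y_2)\rangle_{\mathbb{A}}=\langle x_1,y_1\rangle_A+\langle x_2,y_2\rangle_A$. *)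

theory Defs
  imports "HOL-Analysis.Analysis"
begin

class complex_vector = real_vector +
  fixes scaleC :: "complex \<Rightarrow> 'a \<Rightarrow> 'a" (infixr \<open>*\<^sub>C\<close> 75)
  assumes scaleC_add_right: "a *\<^sub>C (x + y) = a *\<^sub>C x + a *\<^sub>C y"
    and scaleC_add_left: "(a + b) *\<^sub>C x = a *\<^sub>C x + b *\<^sub>C x"
    and scaleC_scaleC: "a *\<^sub>C (b *\<^sub>C x) = (a * b) *\<^sub>C x"
    and scaleC_one: "1 *\<^sub>C x = x"
    and scaleR_scaleC: "scaleR r x = complex_of_real r *\<^sub>C x"

class complex_inner = complex_vector + real_normed_vector +
  fixes cinner :: "'a \<Rightarrow> 'a \<Rightarrow> complex"
  assumes cinner_commute: "cinner x y = cnj (cinner y x)"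
    and cinner_add_left: "cinner (x + y) z = cinner x z + cinner y z"
    and cinner_scaleC_left: "cinner (a *\<^sub>C x) y = a * cinner x y"
    and cinner_self_nonneg: "0 \<le> Re (cinner x x)"
    and cinner_self_eq_zero: "cinner x x = 0 \<longleftrightarrow> x = 0"
    and norm_eq_sqrt_cinner: "norm x = sqrt (Re (cinner x x))"

class chilbert_space = complex_inner + complete_space

definition bounded_clinear :: "('a::complex_inner \<Rightarrow> 'a) \<Rightarrow> bool" where
  "bounded_clinear T \<longleftrightarrow>
     (\<forall>x y. T (x + y) = T x + T y) \<and> (\<forall>c x. T (c *\<^sub>C x) = c *\<^sub>C T x) \<and>
     (\<exists>K. \<forall>x. norm (T x) \<le> norm x * K)"

definition is_adjoint :: "('a::complex_inner \<Rightarrow> 'a) \<Rightarrow> ('a \<Rightarrow> 'a) \<Rightarrow> bool" where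
  "is_adjoint T S \<longleftrightarrow> (\<forall>x y. cinner (T x) y = cinner x (S y))"

text \<open>The adjoint \<open>T\<^sup>*\<close> (exists and is unique for bounded operators on a Hilbert space).\<close>
definition adjoint :: "('a::complex_inner \<Rightarrow> 'a) \<Rightarrow> ('a \<Rightarrow> 'a)" where
  "adjoint T = (SOME S. is_adjoint T S)"

definition positive_op :: "('a::complex_inner \<Rightarrow> 'a) \<Rightarrow> bool" where
  "positive_op A \<longleftrightarrow> bounded_clinear A \<and>
     (\<forall>x. Im (cinner (A x) x) = 0 \<and> 0 \<le> Re (cinner (A x) x))"

definition A_inner :: "('a::complex_inner \<Rightarrow> 'a) \<Rightarrow> 'a \<Rightarrow> 'a \<Rightarrow> complex" where
  "A_inner A x y = cinner (A x) y"

definition A_norm :: "('a::complex_inner \<Rightarrow> 'a) \<Rightarrow> 'a \<Rightarrow> real" where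
  "A_norm A x = sqrt (Re (A_inner A x x))"

definition BA :: "('a::complex_inner \<Rightarrow> 'a) \<Rightarrow> ('a \<Rightarrow> 'a) set" where
  "BA A = {T. bounded_clinear T \<and> range (adjoint T \<circ> A) \<subseteq> range A}"

definition omega_A :: "('a::complex_inner \<Rightarrow> 'a) \<Rightarrow> ('a \<Rightarrow> 'a) \<Rightarrow> real" where
  "omega_A A T = Sup {cmod (A_inner A (T x) x) | x. A_norm A x = 1}"

text \<open>The semi-inner product induced by \<open>\<AA> = diag(A,A)\<close> on \<open>H \<oplus> H\<close> (modelled as \<open>'a \<times> 'a\<close>).\<close>
definition AA_inner :: "('a::complex_inner \<Rightarrow> 'a) \<Rightarrow> 'a \<times> 'a \<Rightarrow> 'a \<times> 'a \<Rightarrow> complex" where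
  "AA_inner A x y = A_inner A (fst x) (fst y) + A_inner A (snd x) (snd y)"

definition AA_norm :: "('a::complex_inner \<Rightarrow> 'a) \<Rightarrow> 'a \<times> 'a \<Rightarrow> real" where
  "AA_norm A x = sqrt (Re (AA_inner A x x))"

definition omega_AA :: "('a::complex_inner \<Rightarrow> 'a) \<Rightarrow> ('a \<times> 'a \<Rightarrow> 'a \<times> 'a) \<Rightarrow> real" where
  "omega_AA A T = Sup {cmod (AA_inner A (T z) z) | z. AA_norm A z = 1}"

definition block_op :: "('a::complex_inner \<Rightarrow> 'a) \<Rightarrow> ('a \<Rightarrow> 'a) \<Rightarrow> ('a \<Rightarrow> 'a) \<Rightarrow> ('a \<Rightarrow> 'a)
    \<Rightarrow> 'a \<times> 'a \<Rightarrow> 'a \<times> 'a" where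
  "block_op P Q R S z = (P (fst z) + Q (snd z), R (fst z) + S (snd z))"

end

theory Submission
  imports Defs
begin

text \<open>
  For a unimodular \<open>e\<close> and \<open>x\<close> with \<open>\<parallel>x\<parallel>\<^sub>A = 1\<close>, the vector \<open>z = (x, e x) / \<surd>2\<close> has
  \<open>\<AA>\<close>-norm 1 and \<open>\<langle>M z, z\<rangle>\<^sub>\<AA> = \<langle>(P + e Q + cnj e R + S) x, x\<rangle>\<^sub>A / 2\<close> for the block operator
  \<open>M\<close>, so \<open>\<omega>\<^sub>A(P + e Q + cnj e R + S) \<le> 2 \<omega>\<^sub>\<AA>(M)\<close>. The four operators in \<open>\<mu>\<close> and \<open>\<nu>\<close>
  are unimodular multiples of these for \<open>e = 1, -1, -\<i>, \<i>\<close>.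

  Comparing suprema requires the supremum defining \<open>\<omega>\<^sub>\<AA>(M)\<close> to be finite, i.e. every
  operator in \<open>\<B>_A(H)\<close> must be bounded for the \<open>A\<close>-seminorm. Douglas' factorisation
  \<open>T\<^sup>* A = A C\<close> with bounded \<open>C\<close> (obtained from the uniform boundedness principle and orthogonal
  projection) makes \<open>U = C T\<close> an \<open>A\<close>-selfadjoint bounded operator with
  \<open>\<langle>U x, x\<rangle>\<^sub>A = \<parallel>T x\<parallel>\<^sub>A\<^sup>2\<close>, and Lax's iteration of \<open>\<parallel>U x\<parallel>\<^sub>A\<^sup>2 \<le> \<parallel>x\<parallel>\<^sub>A \<parallel>U\<^sup>2 x\<parallel>\<^sub>A\<close>
  bounds \<open>U\<close>, hence \<open>T\<close>, in that seminorm.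
\<close>

section \<open>Complex inner product spaces\<close>

lemma scaleC_zero_left [simp]: "0 *\<^sub>C x = (0::'a::complex_vector)"
  using scaleR_scaleC[of 0 x] by simp

lemma scaleC_zero_right [simp]: "a *\<^sub>C (0::'a::complex_vector) = 0"
  using scaleC_add_right[of a "0::'a" 0] by simp

lemma scaleC_minus_left: "(- a) *\<^sub>C x = - (a *\<^sub>C (x::'a::complex_vector))"
proof -
  have "a *\<^sub>C x + (- a) *\<^sub>C x = 0"
    using scaleC_add_left[of a "-a" x] by simp
  from minus_unique[OF this] show ?thesis by simp
qed

lemma scaleC_minus_right: "a *\<^sub>C (- x) = - (a *\<^sub>C (x::'a::complex_vector))"
proof -
  have "a *\<^sub>C x + a *\<^sub>C (- x) = 0"
    using scaleC_add_right[of a x "-x"] by simp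
  from minus_unique[OF this] show ?thesis by simp
qed

lemma scaleC_diff_right: "a *\<^sub>C (x - y) = a *\<^sub>C x - a *\<^sub>C (y::'a::complex_vector)"
  using scaleC_add_right[of a x "-y"] by (simp add: scaleC_minus_right)

lemma cinner_zero_left [simp]: "cinner 0 y = 0"
  using cinner_add_left[of 0 0 y] by simp

lemma cinner_minus_left: "cinner (- x) y = - cinner x y"
proof -
  have "cinner x y + cinner (- x) y = 0"
    using cinner_add_left[of x "-x" y] by simp
  from minus_unique[OF this] show ?thesis by simp
qed

lemma cinner_diff_left: "cinner (x - y) z = cinner x z - cinner y z"
  using cinner_add_left[of x "-y" z] by (simp add: cinner_minus_left)

lemma cinner_add_right: "cinner x (y + z) = cinner x y + cinner x z"
  by (subst (1 2 3) cinner_commute) (simp add: cinner_add_left)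

lemma cinner_zero_right [simp]: "cinner x 0 = 0"
  by (subst cinner_commute) simp

lemma cinner_minus_right: "cinner x (- y) = - cinner x y"
  by (subst (1 2) cinner_commute) (simp add: cinner_minus_left)

lemma cinner_diff_right: "cinner x (y - z) = cinner x y - cinner x z"
  using cinner_add_right[of x y "-z"] by (simp add: cinner_minus_right)

lemma cinner_scaleC_right: "cinner x (a *\<^sub>C y) = cnj a * cinner x y"
  by (subst (1 2) cinner_commute) (simp add: cinner_scaleC_left)

lemma cinner_scaleR_left: "cinner (r *\<^sub>R x) y = complex_of_real r * cinner x y"
  by (simp add: scaleR_scaleC cinner_scaleC_left)

lemma cinner_scaleR_right: "cinner x (r *\<^sub>R y) = complex_of_real r * cinner x y"
  by (simp add: scaleR_scaleC cinner_scaleC_right)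

lemma cinner_self_eq_norm_power2: "cinner x x = complex_of_real ((norm x)\<^sup>2)"
proof -
  have "Im (cinner x x) = 0"
    using arg_cong[OF cinner_commute[of x x], of Im] by simp
  then show ?thesis
    using norm_eq_sqrt_cinner[of x] cinner_self_nonneg[of x] by (simp add: complex_eq_iff)
qed

lemma norm_scaleC: "norm (a *\<^sub>C (x::'a::complex_inner)) = cmod a * norm x"
proof -
  have "a * cnj a = complex_of_real ((cmod a)\<^sup>2)"
    using complex_norm_square[of a] by simp
  then have "cinner (a *\<^sub>C x) (a *\<^sub>C x) = complex_of_real ((cmod a)\<^sup>2) * cinner x x"
    by (simp add: cinner_scaleC_left cinner_scaleC_right mult.commute[of "cnj a"] flip: mult.assoc)
  then have "(norm (a *\<^sub>C x))\<^sup>2 = ((cmod a) * norm x)\<^sup>2"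
    by (metis cinner_self_eq_norm_power2 of_real_eq_iff of_real_mult power_mult_distrib)
  then show ?thesis
    by simp
qed

lemma norm_add_power2:
  "(norm (u + v))\<^sup>2 = (norm u)\<^sup>2 + 2 * Re (cinner u v) + (norm (v::'a::complex_inner))\<^sup>2"
proof -
  have "cinner (u + v) (u + v) = cinner u u + cinner u v + cnj (cinner u v) + cinner v v"
    by (simp add: cinner_add_left cinner_add_right cinner_commute[of v u])
  then have "Re (cinner (u + v) (u + v)) = Re (cinner u u) + 2 * Re (cinner u v) + Re (cinner v v)"
    by simp
  then show ?thesis
    by (simp add: cinner_self_eq_norm_power2)
qed

lemma norm_diff_power2:
  "(norm (u - v))\<^sup>2 = (norm u)\<^sup>2 - 2 * Re (cinner u v) + (norm (v::'a::complex_inner))\<^sup>2"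
  using norm_add_power2[of u "-v"] by (simp add: cinner_minus_right)

lemma parallelogram_law:
  "(norm (u + v))\<^sup>2 + (norm (u - v))\<^sup>2 = 2 * (norm u)\<^sup>2 + 2 * (norm (v::'a::complex_inner))\<^sup>2"
  by (simp add: norm_add_power2 norm_diff_power2)

lemma bounded_linear_scaleC_right: "bounded_linear (\<lambda>x::'a::complex_inner. c *\<^sub>C x)"
proof (rule bounded_linear_intro[of _ "cmod c"])
  show "c *\<^sub>C (r *\<^sub>R x) = r *\<^sub>R (c *\<^sub>C x)" for r and x :: 'a
    by (simp add: scaleR_scaleC scaleC_scaleC mult.commute)
qed (simp_all add: scaleC_add_right norm_scaleC mult.commute)

lemma bounded_clinear_add: "bounded_clinear T \<Longrightarrow> T (x + y) = T x + T y"
  unfolding bounded_clinear_def by blast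

lemma bounded_clinear_scaleC: "bounded_clinear T \<Longrightarrow> T (c *\<^sub>C x) = c *\<^sub>C T x"
  unfolding bounded_clinear_def by blast

lemma bounded_clinear_zero: "bounded_clinear T \<Longrightarrow> T 0 = 0"
  using bounded_clinear_scaleC[of T 0 0] by simp

lemma bounded_clinear_minus: "bounded_clinear T \<Longrightarrow> T (- x) = - T x"
  using bounded_clinear_scaleC[of T "-1" x] by (simp add: scaleC_minus_left scaleC_one)

lemma bounded_clinear_diff: "bounded_clinear T \<Longrightarrow> T (x - y) = T x - T y"
  using bounded_clinear_add[of T x "-y"] bounded_clinear_minus[of T y] by simp

lemma bounded_clinear_scaleR: "bounded_clinear T \<Longrightarrow> T (r *\<^sub>R x) = r *\<^sub>R T x"
  by (simp add: scaleR_scaleC bounded_clinear_scaleC)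

lemma bounded_clinear_pos_bound:
  assumes "bounded_clinear T"
  obtains K where "K > 0" "\<And>x. norm (T x) \<le> norm x * K"
proof -
  obtain K where K: "\<And>x. norm (T x) \<le> norm x * K"
    using assms unfolding bounded_clinear_def by blast
  have "norm (T x) \<le> norm x * max K 1" for x
    by (rule order_trans[OF K]) (simp add: mult_left_mono)
  then show ?thesis
    using that[of "max K 1"] by simp
qed

lemma bounded_clinear_id: "bounded_clinear (\<lambda>x. x)"
  unfolding bounded_clinear_def by (auto intro: exI[of _ 1])

lemma positive_op_bounded_clinear: "positive_op A \<Longrightarrow> bounded_clinear A"
  unfolding positive_op_def by blast

lemma positive_op_Re_nonneg: "positive_op A \<Longrightarrow> 0 \<le> Re (cinner (A x) x)"
  unfolding positive_op_def by blast

lemma positive_op_hermitian: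
  assumes A: "positive_op A"
  shows "cinner (A x) y = cinner x (A y)"
proof -
  have L: "bounded_clinear A"
    using A by (rule positive_op_bounded_clinear)
  have real: "Im (cinner (A u) u) = 0" for u
    using A unfolding positive_op_def by blast
  define a where "a = cinner (A x) y"
  define b where "b = cinner (A y) x"
  have "cinner (A (x + y)) (x + y) = cinner (A x) x + a + b + cinner (A y) y"
    by (simp add: a_def b_def bounded_clinear_add[OF L] cinner_add_left cinner_add_right)
  then have "Im (a + b) = 0"
    using real[of "x + y"] real[of x] real[of y] by simp
  moreover have "cinner (A (x + \<i> *\<^sub>C y)) (x + \<i> *\<^sub>C y)
      = cinner (A x) x - \<i> * a + \<i> * b + cinner (A y) y"
    by (simp add: a_def b_def bounded_clinear_add[OF L] bounded_clinear_scaleC[OF L]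
        cinner_add_left cinner_add_right cinner_scaleC_left cinner_scaleC_right algebra_simps)
  then have "Re b - Re a = 0"
    using real[of "x + \<i> *\<^sub>C y"] real[of x] real[of y] by simp
  ultimately have "a = cnj b"
    by (simp add: complex_eq_iff)
  then show ?thesis
    by (simp add: a_def b_def cinner_commute[of x])
qed

lemma positive_op_id: "positive_op (\<lambda>x. x)"
  unfolding positive_op_def
  by (simp only: bounded_clinear_id cinner_self_eq_norm_power2 Im_complex_of_real
      Re_complex_of_real) simp

lemma A_norm_nonneg: "positive_op A \<Longrightarrow> 0 \<le> A_norm A x"
  by (simp add: A_norm_def A_inner_def positive_op_Re_nonneg)

lemma A_norm_power2: "positive_op A \<Longrightarrow> (A_norm A x)\<^sup>2 = Re (A_inner A x x)"
  by (simp add: A_norm_def A_inner_def positive_op_Re_nonneg)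

lemma quadratic_nonneg_imp_discriminant_le:
  fixes a b c :: real
  assumes nonneg: "\<And>s. 0 \<le> a - 2 * s * b + s\<^sup>2 * c" and "0 \<le> c"
  shows "b\<^sup>2 \<le> a * c"
proof (cases "c = 0")
  case True
  have "b = 0"
  proof (rule ccontr)
    assume "b \<noteq> 0"
    then show False
      using nonneg[of "(a + 1) / (2 * b)"] True by (simp add: field_simps)
  qed
  then show ?thesis
    using nonneg[of 0] True by simp
next
  case False
  then have "0 \<le> c * (a - 2 * (b / c) * b + (b / c)\<^sup>2 * c)"
    using nonneg[of "b / c"] \<open>0 \<le> c\<close> by simp
  also have "\<dots> = a * c - b\<^sup>2"
    using False by (simp add: field_simps power2_eq_square)
  finally show ?thesis by simp
qed

lemma A_inner_cauchy_schwarz: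
  assumes A: "positive_op A"
  shows "cmod (A_inner A x y) \<le> A_norm A x * A_norm A y"
proof (cases "A_inner A x y = 0")
  case True
  then show ?thesis
    using A_norm_nonneg[OF A] by simp
next
  case False
  have L: "bounded_clinear A"
    using A by (rule positive_op_bounded_clinear)
  define b where "b = cinner (A x) y"
  define \<beta> where "\<beta> = (cmod b)\<^sup>2"
  have bb: "b * cnj b = complex_of_real \<beta>"
    using complex_norm_square[of b] by (simp add: \<beta>_def)
  then have bb': "cnj b * b = complex_of_real \<beta>"
    by (simp add: mult.commute)
  have "\<beta>\<^sup>2 \<le> Re (cinner (A x) x) * (\<beta> * Re (cinner (A y) y))"
  proof (rule quadratic_nonneg_imp_discriminant_le)
    fix s :: real
    define t where "t = complex_of_real s * b"
    have "cnj t * b = complex_of_real (s * \<beta>)" "t * cnj b = complex_of_real (s * \<beta>)"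
      "t * cnj t = complex_of_real (s\<^sup>2 * \<beta>)"
      by (simp_all add: t_def mult.assoc bb bb' mult.left_commute[of b] power2_eq_square)
    moreover have "cinner (A (x - t *\<^sub>C y)) (x - t *\<^sub>C y)
        = cinner (A x) x - cnj t * b - t * cnj b + t * cnj t * cinner (A y) y"
      by (simp add: b_def positive_op_hermitian[OF A, of y x] cinner_commute[of y "A x"]
          bounded_clinear_diff[OF L] bounded_clinear_scaleC[OF L] cinner_diff_left
          cinner_diff_right cinner_scaleC_left cinner_scaleC_right algebra_simps)
    ultimately show "0 \<le> Re (cinner (A x) x) - 2 * s * \<beta> + s\<^sup>2 * (\<beta> * Re (cinner (A y) y))"
      using positive_op_Re_nonneg[OF A, of "x - t *\<^sub>C y"] by (simp add: ac_simps)
  qed (simp add: \<beta>_def positive_op_Re_nonneg[OF A])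
  then have "\<beta> * \<beta> \<le> \<beta> * (Re (cinner (A x) x) * Re (cinner (A y) y))"
    by (simp add: power2_eq_square ac_simps)
  moreover have "\<beta> > 0"
    using False by (simp add: \<beta>_def b_def A_inner_def)
  ultimately have "\<beta> \<le> Re (cinner (A x) x) * Re (cinner (A y) y)"
    by simp
  then have "sqrt ((cmod b)\<^sup>2) \<le> sqrt (Re (cinner (A x) x) * Re (cinner (A y) y))"
    unfolding \<beta>_def by (rule real_sqrt_le_mono)
  then show ?thesis
    by (simp add: A_norm_def A_inner_def b_def real_sqrt_mult)
qed

lemma cinner_cauchy_schwarz: "cmod (cinner x y) \<le> norm x * norm (y::'a::complex_inner)"
  using A_inner_cauchy_schwarz[OF positive_op_id, of x y]
  by (simp add: A_inner_def A_norm_def norm_eq_sqrt_cinner)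

lemma bounded_linear_cinner_right: "bounded_linear (\<lambda>y. cinner (x::'a::complex_inner) y)"
proof (rule bounded_linear_intro[of _ "norm x"])
  show "norm (cinner x y) \<le> norm y * norm x" for y
    using cinner_cauchy_schwarz[of x y] by (simp add: mult.commute)
qed (simp_all add: cinner_add_right cinner_scaleR_right scaleR_conv_of_real)

section \<open>Orthogonal projection, Riesz representation, adjoints\<close>

definition csubspace :: "'a::complex_vector set \<Rightarrow> bool" where
  "csubspace M \<longleftrightarrow> 0 \<in> M \<and> (\<forall>x\<in>M. \<forall>y\<in>M. x + y \<in> M) \<and> (\<forall>c. \<forall>x\<in>M. c *\<^sub>C x \<in> M)"

lemma csubspace_convex: "csubspace M \<Longrightarrow> convex M"
  unfolding csubspace_def convex_def by (simp add: scaleR_scaleC)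

lemma convex_norm_diff_power2_le:
  fixes M :: "'a::complex_inner set"
  assumes "convex M" "m1 \<in> M" "m2 \<in> M"
  shows "(norm (m1 - m2))\<^sup>2 \<le> 2 * (dist z m1)\<^sup>2 + 2 * (dist z m2)\<^sup>2 - 4 * (infdist z M)\<^sup>2"
proof -
  have "(1/2) *\<^sub>R m1 + (1/2) *\<^sub>R m2 \<in> M"
    using convexD[OF assms, of "1/2" "1/2"] by simp
  then have "infdist z M \<le> norm (z - ((1/2) *\<^sub>R m1 + (1/2) *\<^sub>R m2))"
    by (metis infdist_le dist_norm)
  also have "\<dots> = norm ((z - m1) + (z - m2)) / 2"
  proof -
    have "(z - m1) + (z - m2) = 2 *\<^sub>R (z - ((1/2) *\<^sub>R m1 + (1/2) *\<^sub>R m2))"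
      by (simp add: algebra_simps scaleR_2)
    then show ?thesis
      by simp
  qed
  finally have "(2 * infdist z M)\<^sup>2 \<le> (norm ((z - m1) + (z - m2)))\<^sup>2"
    using infdist_nonneg by (intro power_mono) auto
  moreover have "(z - m1) - (z - m2) = m2 - m1"
    by simp
  ultimately show ?thesis
    using parallelogram_law[of "z - m1" "z - m2"]
    by (simp add: dist_norm norm_minus_commute[of m1])
qed

lemma Cauchy_if_tendsto_infdist:
  fixes m :: "nat \<Rightarrow> 'a::complex_inner"
  assumes "convex M" and mem: "\<And>n. m n \<in> M" and lim: "(\<lambda>n. dist z (m n)) \<longlonglongrightarrow> infdist z M"
  shows "Cauchy m"
proof (rule CauchyI)
  fix e :: real
  assume "e > 0"
  define \<delta> where "\<delta> n = 2 * (dist z (m n))\<^sup>2 - 2 * (infdist z M)\<^sup>2" for n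
  have "\<delta> \<longlonglongrightarrow> 2 * (infdist z M)\<^sup>2 - 2 * (infdist z M)\<^sup>2"
    unfolding \<delta>_def by (intro tendsto_intros lim)
  then have "eventually (\<lambda>n. \<delta> n < e\<^sup>2 / 2) sequentially"
    using \<open>e > 0\<close> by (intro order_tendstoD(2)) auto
  then obtain N where N: "\<And>n. n \<ge> N \<Longrightarrow> \<delta> n < e\<^sup>2 / 2"
    unfolding eventually_sequentially by blast
  have "norm (m i - m j) < e" if "i \<ge> N" "j \<ge> N" for i j
  proof -
    have "(norm (m i - m j))\<^sup>2 \<le> \<delta> i + \<delta> j"
      using convex_norm_diff_power2_le[OF assms(1) mem mem, of i j z] by (simp add: \<delta>_def)
    also have "\<dots> < e\<^sup>2"
      using N[OF that(1)] N[OF that(2)] by simp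
    finally show ?thesis
      using \<open>e > 0\<close> by (simp add: power_less_imp_less_base)
  qed
  then show "\<exists>N. \<forall>i\<ge>N. \<forall>j\<ge>N. norm (m i - m j) < e"
    by blast
qed

lemma closed_convex_nearest_point_exists:
  fixes M :: "'a::chilbert_space set"
  assumes "closed M" "convex M" "M \<noteq> {}"
  obtains p where "p \<in> M" "\<And>m. m \<in> M \<Longrightarrow> dist z p \<le> dist z m"
proof -
  have "\<exists>m\<in>M. dist z m < infdist z M + inverse (real (Suc n))" for n
  proof -
    have "(INF m\<in>M. dist z m) < infdist z M + inverse (real (Suc n))"
      using assms(3) by (simp add: infdist_notempty)
    then show ?thesis
      using cINF_less_iff[OF assms(3) bdd_below_image_dist] by blast
  qed
  then obtain m where mem: "\<And>n. m n \<in> M"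
    and close: "\<And>n. dist z (m n) < infdist z M + inverse (real (Suc n))"
    by metis
  have upper: "(\<lambda>n. infdist z M + inverse (real (Suc n))) \<longlonglongrightarrow> infdist z M"
    using tendsto_add[OF tendsto_const LIMSEQ_inverse_real_of_nat] by simp
  have lim: "(\<lambda>n. dist z (m n)) \<longlonglongrightarrow> infdist z M"
  proof (rule tendsto_sandwich[OF _ _ tendsto_const upper])
    show "\<forall>\<^sub>F n in sequentially. infdist z M \<le> dist z (m n)"
      using infdist_le[OF mem] by simp
    show "\<forall>\<^sub>F n in sequentially. dist z (m n) \<le> infdist z M + inverse (real (Suc n))"
      using close by (simp add: less_imp_le)
  qed
  obtain p where mp: "m \<longlonglongrightarrow> p"
    using Cauchy_if_tendsto_infdist[OF assms(2) mem lim] Cauchy_convergent_iff convergent_def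
    by blast
  have "p \<in> M"
    using closed_sequentially[OF assms(1) mem mp] .
  moreover have "dist z p = infdist z M"
    using LIMSEQ_unique[OF tendsto_dist[OF tendsto_const mp] lim] .
  ultimately show ?thesis
    using that infdist_le by metis
qed

lemma cinner_eq_0_if_norm_le_norm_diff:
  fixes w m :: "'a::complex_inner"
  assumes le: "\<And>t. norm w \<le> norm (w - t *\<^sub>C m)"
  shows "cinner w m = 0"
proof (cases "m = 0")
  case False
  define c where "c = cinner w m"
  define r where "r = 1 / (norm m)\<^sup>2"
  define t where "t = complex_of_real r * c"
  have "r > 0" and rm: "r * (norm m)\<^sup>2 = 1"
    using False by (simp_all add: r_def)
  have "cnj c * c = complex_of_real ((cmod c)\<^sup>2)"
    using complex_norm_square[of c] by (simp add: mult.commute)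
  then have "Re (cinner w (t *\<^sub>C m)) = r * (cmod c)\<^sup>2"
    by (simp add: t_def cinner_scaleC_right mult.assoc flip: c_def)
  moreover have "(norm (t *\<^sub>C m))\<^sup>2 = r * (cmod c)\<^sup>2 * (r * (norm m)\<^sup>2)"
    using \<open>r > 0\<close> by (simp add: t_def norm_scaleC norm_mult power2_eq_square)
  ultimately have "(norm (w - t *\<^sub>C m))\<^sup>2 = (norm w)\<^sup>2 - r * (cmod c)\<^sup>2"
    by (simp add: norm_diff_power2 rm)
  moreover have "(norm w)\<^sup>2 \<le> (norm (w - t *\<^sub>C m))\<^sup>2"
    using le by (simp add: power_mono)
  ultimately have "r * (cmod c)\<^sup>2 \<le> 0"
    by simp
  then show ?thesis
    using \<open>r > 0\<close> by (simp add: c_def mult_le_0_iff)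
qed simp

lemma closed_csubspace_orthogonal_projection:
  fixes M :: "'a::chilbert_space set"
  assumes "closed M" "csubspace M"
  obtains p where "p \<in> M" "\<And>m. m \<in> M \<Longrightarrow> cinner (z - p) m = 0"
proof -
  have "M \<noteq> {}"
    using assms(2) by (auto simp: csubspace_def)
  then obtain p where p: "p \<in> M" and near: "\<And>m. m \<in> M \<Longrightarrow> dist z p \<le> dist z m"
    using closed_convex_nearest_point_exists[OF assms(1) csubspace_convex[OF assms(2)]] by metis
  have "cinner (z - p) m = 0" if "m \<in> M" for m
  proof (rule cinner_eq_0_if_norm_le_norm_diff)
    fix t
    have "p + t *\<^sub>C m \<in> M"
      using assms(2) p that by (simp add: csubspace_def)
    then have "dist z p \<le> dist z (p + t *\<^sub>C m)"
      by (rule near)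
    then show "norm (z - p) \<le> norm (z - p - t *\<^sub>C m)"
      by (simp add: dist_norm diff_diff_eq)
  qed
  then show ?thesis
    using that p by blast
qed

lemma riesz_representation:
  fixes f :: "'a::chilbert_space \<Rightarrow> complex"
  assumes add: "\<And>x y. f (x + y) = f x + f y" and scale: "\<And>c x. f (c *\<^sub>C x) = c * f x"
    and bound: "\<And>x. cmod (f x) \<le> norm x * K"
  obtains z where "\<And>x. f x = cinner x z"
proof (cases "\<forall>x. f x = 0")
  case True
  then show ?thesis
    using that[of 0] by simp
next
  case False
  then obtain x0 where "f x0 \<noteq> 0"
    by blast
  have f0: "f 0 = 0"
    using scale[of 0 0] by simp
  have diff: "f (x - y) = f x - f y" for x y
    using add[of x "-y"] scale[of "-1" y] by (simp add: scaleC_minus_left scaleC_one)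
  have "bounded_linear f"
  proof (rule bounded_linear_intro[of _ K])
    show "f (r *\<^sub>R x) = r *\<^sub>R f x" for r x
      using scale[of "complex_of_real r" x] by (simp add: scaleR_scaleC scaleR_conv_of_real)
  qed (simp_all add: add bound)
  then have "closed {x. f x = 0}"
    by (intro closed_Collect_eq continuous_on_const linear_continuous_on)
  moreover have "csubspace {x. f x = 0}"
    by (simp add: csubspace_def f0 add scale)
  ultimately obtain p where "f p = 0" and orth: "\<And>m. f m = 0 \<Longrightarrow> cinner (x0 - p) m = 0"
    by (rule closed_csubspace_orthogonal_projection[where z = x0]) auto
  define u where "u = x0 - p"
  have fu: "f u \<noteq> 0"
    using \<open>f x0 \<noteq> 0\<close> \<open>f p = 0\<close> by (simp add: u_def diff)
  then have "cinner u u \<noteq> 0"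
    using f0 cinner_self_eq_zero[of u] by auto
  have "f x = cinner x (cnj (f u / cinner u u) *\<^sub>C u)" for x
  proof -
    have "f (x - (f x / f u) *\<^sub>C u) = 0"
      using fu by (simp add: diff scale)
    from orth[OF this] have "cinner (x - (f x / f u) *\<^sub>C u) u = 0"
      by (subst cinner_commute) (simp add: u_def)
    then have "cinner x u = (f x / f u) * cinner u u"
      by (simp add: cinner_diff_left cinner_scaleC_left)
    then show ?thesis
      using fu \<open>cinner u u \<noteq> 0\<close> by (simp add: cinner_scaleC_right)
  qed
  then show ?thesis
    using that by blast
qed

lemma cinner_adjoint:
  fixes T :: "'a::chilbert_space \<Rightarrow> 'a"
  assumes T: "bounded_clinear T"
  shows "cinner (T x) y = cinner x (adjoint T y)"
proof -
  obtain K where K: "\<And>x. norm (T x) \<le> norm x * K"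
    using T unfolding bounded_clinear_def by blast
  have "\<exists>z. \<forall>x. cinner (T x) y = cinner x z" for y
  proof (rule riesz_representation[where K = "K * norm y"])
    show "\<exists>z'. \<forall>x. cinner (T x) y = cinner x z'" if "\<And>x. cinner (T x) y = cinner x z" for z
      using that by blast
  next
    fix x
    have "cmod (cinner (T x) y) \<le> norm (T x) * norm y"
      by (rule cinner_cauchy_schwarz)
    also have "\<dots> \<le> norm x * (K * norm y)"
      using mult_right_mono[OF K[of x] norm_ge_zero[of y]] by (simp add: mult.assoc)
    finally show "cmod (cinner (T x) y) \<le> norm x * (K * norm y)" .
  qed (simp_all add: bounded_clinear_add[OF T] bounded_clinear_scaleC[OF T]
      cinner_add_left cinner_scaleC_left)
  then obtain S where "\<forall>y x. cinner (T x) y = cinner x (S y)"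
    by metis
  then have "is_adjoint T S"
    unfolding is_adjoint_def by blast
  then have "is_adjoint T (adjoint T)"
    unfolding adjoint_def by (rule someI[of "is_adjoint T"])
  then show ?thesis
    unfolding is_adjoint_def by blast
qed

section \<open>Douglas factorisation for operators in \<open>\<B>_A(H)\<close>\<close>

lemma csubspace_range:
  assumes "bounded_clinear A"
  shows "csubspace (range A)"
proof -
  have "0 \<in> range A"
    using bounded_clinear_zero[OF assms] by (metis rangeI)
  moreover have "A x + A y \<in> range A" "c *\<^sub>C A x \<in> range A" for x y c
    by (simp_all flip: bounded_clinear_add[OF assms] bounded_clinear_scaleC[OF assms])
  ultimately show ?thesis
    unfolding csubspace_def by blast
qed

lemma csubspace_closure:
  fixes M :: "'a::complex_inner set"
  assumes "csubspace M"
  shows "csubspace (closure M)"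
  unfolding csubspace_def
proof (intro conjI ballI allI)
  show "0 \<in> closure M"
    using assms closure_subset by (auto simp: csubspace_def)
next
  fix x y
  assume "x \<in> closure M" "y \<in> closure M"
  then obtain xs ys where "\<And>n. xs n \<in> M" "xs \<longlonglongrightarrow> x" "\<And>n. ys n \<in> M" "ys \<longlonglongrightarrow> y"
    unfolding closure_sequential by blast
  moreover have "\<forall>n. xs n + ys n \<in> M"
    using assms calculation(1,3) by (simp add: csubspace_def)
  ultimately show "x + y \<in> closure M"
    unfolding closure_sequential by (intro exI[of _ "\<lambda>n. xs n + ys n"]) (simp add: tendsto_add)
next
  fix c x
  assume "x \<in> closure M"
  then obtain xs where "\<And>n. xs n \<in> M" "xs \<longlonglongrightarrow> x"
    unfolding closure_sequential by blast
  moreover have "(\<lambda>n. c *\<^sub>C xs n) \<longlonglongrightarrow> c *\<^sub>C x"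
    using bounded_linear.tendsto[OF bounded_linear_scaleC_right \<open>xs \<longlonglongrightarrow> x\<close>] .
  moreover have "\<forall>n. c *\<^sub>C xs n \<in> M"
    using assms calculation(1) by (simp add: csubspace_def)
  ultimately show "c *\<^sub>C x \<in> closure M"
    unfolding closure_sequential by (intro exI[of _ "\<lambda>n. c *\<^sub>C xs n"]) simp
qed

lemma linear_norm_le_if_ball_bound:
  assumes "linear h" "r > 0" and ball: "\<And>u. norm u < r \<Longrightarrow> norm (h u) \<le> C"
  shows "norm (h u) \<le> 2 * C / r * norm u"
proof (cases "u = 0")
  case True
  then show ?thesis
    using linear_0[OF assms(1)] by simp
next
  case False
  define s where "s = r / (2 * norm u)"
  have "s > 0" "norm (s *\<^sub>R u) < r"
    using False \<open>r > 0\<close> by (simp_all add: s_def)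
  then have "s * norm (h u) \<le> C"
    using ball[of "s *\<^sub>R u"] by (simp add: linear_scale[OF assms(1)])
  then show ?thesis
    using False \<open>r > 0\<close> by (simp add: s_def field_simps)
qed

lemma closed_cover_nonempty_interior:
  fixes F :: "nat \<Rightarrow> 'a::{metric_space, complete_space} set"
  assumes "\<And>n. closed (F n)" "\<Union>(range F) = UNIV"
  obtains n where "interior (F n) \<noteq> {}"
proof -
  have "\<exists>n. interior (F n) \<noteq> {}"
  proof (rule ccontr)
    assume "\<nexists>n. interior (F n) \<noteq> {}"
    then have "euclidean interior_of \<Union>(range F) = {}"
      using assms(1) by (intro Baire_category_alt) (auto simp: completely_metrizable_space_euclidean)
    then show False
      using assms(2) by simp
  qed
  then show ?thesis
    using that by blast
qed

lemma uniform_boundedness: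
  fixes g :: "'i \<Rightarrow> 'a::{real_normed_vector, complete_space} \<Rightarrow> 'b::real_normed_vector"
  assumes lin: "\<And>i. i \<in> I \<Longrightarrow> bounded_linear (g i)"
    and pointwise: "\<And>y. \<exists>B. \<forall>i\<in>I. norm (g i y) \<le> B"
  obtains K where "K \<ge> 0" "\<And>i y. i \<in> I \<Longrightarrow> norm (g i y) \<le> K * norm y"
proof -
  define F where "F n = (\<Inter>i\<in>I. {y. norm (g i y) \<le> real n})" for n
  have "closed {y. norm (g i y) \<le> real n}" if "i \<in> I" for i n
    using lin[OF that]
    by (intro closed_Collect_le continuous_on_const continuous_on_norm linear_continuous_on)
  then have closed: "\<And>n. closed (F n)"
    unfolding F_def by blast
  have "\<exists>n. y \<in> F n" for y
  proof -
    obtain B where "\<forall>i\<in>I. norm (g i y) \<le> B"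
      using pointwise by blast
    moreover obtain n where "B \<le> real n"
      using real_arch_simple by blast
    ultimately show ?thesis
      unfolding F_def by (auto intro: order_trans)
  qed
  then have "\<Union>(range F) = UNIV"
    by blast
  then obtain n where "interior (F n) \<noteq> {}"
    by (rule closed_cover_nonempty_interior[OF closed])
  then obtain y0 where "y0 \<in> interior (F n)"
    by blast
  then obtain r where "r > 0" and ball: "ball y0 r \<subseteq> F n"
    using mem_interior by blast
  have "norm (g i y) \<le> 2 * (2 * real n) / r * norm y" if "i \<in> I" for i y
  proof (rule linear_norm_le_if_ball_bound[OF bounded_linear.linear[OF lin[OF that]] \<open>r > 0\<close>])
    fix u :: 'a
    assume "norm u < r"
    then have "y0 + u \<in> F n" "y0 \<in> F n"
      using ball \<open>r > 0\<close> by (auto simp: dist_norm)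
    then have "norm (g i (y0 + u)) \<le> real n" "norm (g i y0) \<le> real n"
      using that by (auto simp: F_def)
    moreover have "g i u = g i (y0 + u) - g i y0"
      using linear_add[OF bounded_linear.linear[OF lin[OF that]]] by simp
    ultimately show "norm (g i u) \<le> 2 * real n"
      using norm_triangle_ineq4[of "g i (y0 + u)" "g i y0"] by simp
  qed
  then show ?thesis
    using that[of "4 * real n / r"] \<open>r > 0\<close> by simp
qed

lemma BA_bounded_clinear: "T \<in> BA A \<Longrightarrow> bounded_clinear T"
  by (simp add: BA_def)

lemma BA_adjoint_in_range:
  assumes "T \<in> BA A"
  obtains w where "A w = adjoint T (A y)"
proof -
  have "(adjoint T \<circ> A) y \<in> range A"
    using assms unfolding BA_def by blast
  then show ?thesis
    using that by auto
qed

lemma cinner_A_eq_if_adjoint_solution: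
  fixes A T :: "'a::chilbert_space \<Rightarrow> 'a"
  assumes A: "positive_op A" and "bounded_clinear T" and w: "A w = adjoint T (A y)"
  shows "cinner (A (T v)) y = cinner (A v) w"
proof -
  have "cinner (A (T v)) y = cinner (T v) (A y)"
    by (rule positive_op_hermitian[OF A])
  also have "\<dots> = cinner v (A w)"
    by (simp add: cinner_adjoint[OF assms(2)] w)
  also have "\<dots> = cinner (A v) w"
    by (simp add: positive_op_hermitian[OF A])
  finally show ?thesis .
qed

lemma BA_cinner_bound:
  fixes A T :: "'a::chilbert_space \<Rightarrow> 'a"
  assumes A: "positive_op A" and T: "T \<in> BA A"
  obtains K where "K \<ge> 0" "\<And>u v. cmod (cinner (A (T v)) u) \<le> K * norm u * norm (A v)"
proof -
  have AL: "bounded_clinear A" and TL: "bounded_clinear T"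
    using A T by (simp_all add: positive_op_bounded_clinear BA_bounded_clinear)
  have pointwise: "\<exists>B. \<forall>v\<in>{v. norm (A v) = 1}. norm (cinner (A (T v)) u) \<le> B" for u
  proof -
    obtain w where "A w = adjoint T (A u)"
      using BA_adjoint_in_range[OF T] .
    then have "cmod (cinner (A (T v)) u) \<le> norm (A v) * norm w" for v
      using cinner_cauchy_schwarz[of "A v" w] by (simp add: cinner_A_eq_if_adjoint_solution[OF A TL])
    then have "cmod (cinner (A (T v)) u) \<le> norm w" if "norm (A v) = 1" for v
      using that by (metis mult_1)
    then show ?thesis
      by blast
  qed
  obtain K where "K \<ge> 0"
    and K: "\<And>v u. v \<in> {v. norm (A v) = 1} \<Longrightarrow> cmod (cinner (A (T v)) u) \<le> K * norm u"
    using uniform_boundedness[OF bounded_linear_cinner_right pointwise] by blast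
  have "cmod (cinner (A (T v)) u) \<le> K * norm u * norm (A v)" for u v
  proof (cases "A v = 0")
    case True
    obtain w where "A w = adjoint T (A u)"
      using BA_adjoint_in_range[OF T] .
    then show ?thesis
      using cinner_A_eq_if_adjoint_solution[OF A TL] True by simp
  next
    case False
    define v' where "v' = (1 / norm (A v)) *\<^sub>R v"
    have "norm (A v') = 1" "A (T v') = (1 / norm (A v)) *\<^sub>R A (T v)"
      using False by (simp_all add: v'_def bounded_clinear_scaleR[OF AL] bounded_clinear_scaleR[OF TL])
    then have "cmod (cinner (A (T v)) u) / norm (A v) \<le> K * norm u"
      using K[of v' u] by (simp add: cinner_scaleR_left norm_divide)
    then show ?thesis
      using False by (simp add: field_simps)
  qed
  then show ?thesis
    using that \<open>K \<ge> 0\<close> by blast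
qed

lemma norm_le_if_cinner_bounded_on_closure:
  fixes p :: "'a::complex_inner"
  assumes "p \<in> closure M" "0 \<le> c" and bound: "\<And>m. m \<in> M \<Longrightarrow> cmod (cinner p m) \<le> c * norm m"
  shows "norm p \<le> c"
proof -
  have "closed {m. cmod (cinner p m) \<le> c * norm m}"
    by (intro closed_Collect_le continuous_on_norm continuous_on_mult_left continuous_on_id
        linear_continuous_on bounded_linear_cinner_right)
  then have "closure M \<subseteq> {m. cmod (cinner p m) \<le> c * norm m}"
    using bound by (intro closure_minimal) auto
  then have "cmod (cinner p p) \<le> c * norm p"
    using assms(1) by blast
  then have "(norm p)\<^sup>2 \<le> c * norm p"
    by (simp only: cinner_self_eq_norm_power2 norm_of_real abs_power2)
  then show ?thesis
    using \<open>0 \<le> c\<close> by (cases "p = 0") (auto simp: power2_eq_square)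
qed

lemma BA_adjoint_solution_bounded:
  fixes A T :: "'a::chilbert_space \<Rightarrow> 'a"
  assumes A: "positive_op A" and T: "T \<in> BA A"
    and K: "\<And>u v. cmod (cinner (A (T v)) u) \<le> K * norm u * norm (A v)" and "0 \<le> K"
  obtains p where "A p = adjoint T (A y)" "norm p \<le> K * norm y"
proof -
  have AL: "bounded_clinear A" and TL: "bounded_clinear T"
    using A T by (simp_all add: positive_op_bounded_clinear BA_bounded_clinear)
  obtain w where w: "A w = adjoint T (A y)"
    using BA_adjoint_in_range[OF T] .
  \<comment> \<open>The minimal-norm solution: project \<open>w\<close> onto \<open>closure (range A) = (ker A)\<^sup>\<bottom>\<close>.\<close>
  obtain p where p: "p \<in> closure (range A)"
    and orth: "\<And>m. m \<in> closure (range A) \<Longrightarrow> cinner (w - p) m = 0"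
    using closed_csubspace_orthogonal_projection[of "closure (range A)" w]
      csubspace_closure[OF csubspace_range[OF AL]] by blast
  have "cinner (A (w - p)) v = 0" for v
    using orth[of "A v"] closure_subset[of "range A"] positive_op_hermitian[OF A, of "w - p" v]
    by auto
  then have "A p = adjoint T (A y)"
    using w cinner_self_eq_zero[of "A (w - p)"] by (simp add: bounded_clinear_diff[OF AL])
  moreover have "norm p \<le> K * norm y"
  proof (rule norm_le_if_cinner_bounded_on_closure[OF p])
    fix m
    assume "m \<in> range A"
    then obtain v where "m = A v"
      by blast
    moreover have "cinner p (A v) = cnj (cinner (A (T v)) y)"
    proof -
      have "cinner p (A v) = cinner (adjoint T (A y)) v"
        using \<open>A p = adjoint T (A y)\<close> by (simp flip: positive_op_hermitian[OF A, of p])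
      also have "\<dots> = cnj (cinner (T v) (A y))"
        by (subst cinner_commute) (simp add: cinner_adjoint[OF TL])
      also have "\<dots> = cnj (cinner (A (T v)) y)"
        by (simp add: positive_op_hermitian[OF A])
      finally show ?thesis .
    qed
    ultimately show "cmod (cinner p m) \<le> K * norm y * norm m"
      using K[of v y] by simp
  qed (use \<open>0 \<le> K\<close> in simp)
  ultimately show ?thesis
    using that by blast
qed

lemma douglas_factorization:
  fixes A T :: "'a::chilbert_space \<Rightarrow> 'a"
  assumes A: "positive_op A" and T: "T \<in> BA A"
  obtains K C where "K \<ge> 0" "\<And>y. A (C y) = adjoint T (A y)" "\<And>y. norm (C y) \<le> K * norm y"
proof -
  obtain K where "K \<ge> 0" and K: "\<And>u v. cmod (cinner (A (T v)) u) \<le> K * norm u * norm (A v)"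
    using BA_cinner_bound[OF A T] by blast
  have "\<exists>p. A p = adjoint T (A y) \<and> norm p \<le> K * norm y" for y
    using BA_adjoint_solution_bounded[where A = A and T = T and K = K, OF A T K \<open>K \<ge> 0\<close>]
    by metis
  then obtain C where "\<And>y. A (C y) = adjoint T (A y) \<and> norm (C y) \<le> K * norm y"
    by metis
  then show ?thesis
    using that \<open>K \<ge> 0\<close> by blast
qed

section \<open>Operators in \<open>\<B>_A(H)\<close> are \<open>A\<close>-bounded\<close>

definition A_bounded :: "('a::complex_inner \<Rightarrow> 'a) \<Rightarrow> ('a \<Rightarrow> 'a) \<Rightarrow> bool" where
  "A_bounded A T \<longleftrightarrow> (\<exists>M\<ge>0. \<forall>x. A_norm A (T x) \<le> M * A_norm A x)"

lemma A_norm_le_norm: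
  assumes A: "positive_op A"
  obtains K where "K \<ge> 0" "\<And>u. A_norm A u \<le> K * norm u"
proof -
  obtain KA where "KA > 0" and KA: "\<And>x. norm (A x) \<le> norm x * KA"
    using bounded_clinear_pos_bound[OF positive_op_bounded_clinear[OF A]] by blast
  have "A_norm A u \<le> sqrt KA * norm u" for u
  proof -
    have "Re (cinner (A u) u) \<le> norm (A u) * norm u"
      by (rule order_trans[OF complex_Re_le_cmod cinner_cauchy_schwarz])
    also have "\<dots> \<le> KA * (norm u)\<^sup>2"
      using mult_right_mono[OF KA[of u] norm_ge_zero[of u]] by (simp add: power2_eq_square ac_simps)
    finally have "Re (cinner (A u) u) \<le> (sqrt KA * norm u)\<^sup>2"
      using \<open>KA > 0\<close> by (simp add: power_mult_distrib)
    then show ?thesis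
      using \<open>KA > 0\<close> by (simp add: A_norm_def A_inner_def real_le_lsqrt)
  qed
  then show ?thesis
    using that[of "sqrt KA"] \<open>KA > 0\<close> by simp
qed

lemma norm_funpow_le:
  fixes S :: "'a::real_normed_vector \<Rightarrow> 'a"
  assumes "\<And>x. norm (S x) \<le> L * norm x" "0 \<le> L"
  shows "norm ((S ^^ n) x) \<le> L ^ n * norm x"
proof (induction n)
  case (Suc n)
  have "norm ((S ^^ Suc n) x) \<le> L * norm ((S ^^ n) x)"
    using assms(1)[of "(S ^^ n) x"] by simp
  also have "\<dots> \<le> L * (L ^ n * norm x)"
    using Suc.IH assms(2) by (rule mult_left_mono)
  finally show ?case
    by (simp add: mult.assoc)
qed simp

lemma le_if_power_two_pow_le_const_mult:
  fixes a c L :: real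
  assumes bound: "\<And>n. a ^ (2 ^ n) \<le> c * L ^ (2 ^ n)" and "0 \<le> a" "0 \<le> L"
  shows "a \<le> L"
proof (rule ccontr)
  assume "\<not> a \<le> L"
  then have "L > 0"
    using bound[of 0] \<open>0 \<le> L\<close> by (cases "L = 0") auto
  define \<rho> where "\<rho> = a / L"
  have "\<rho> > 1"
    using \<open>\<not> a \<le> L\<close> \<open>L > 0\<close> by (simp add: \<rho>_def)
  then obtain n where "c < \<rho> ^ n"
    using real_arch_pow by blast
  also have "\<dots> \<le> \<rho> ^ (2 ^ n)"
    using \<open>\<rho> > 1\<close> less_exp[of n] by (intro power_increasing) auto
  also have "\<dots> \<le> c"
    using bound[of n] \<open>L > 0\<close> by (simp add: \<rho>_def power_divide divide_le_eq)
  finally show False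
    by simp
qed

lemma A_selfadjoint_funpow:
  fixes A S :: "'a::complex_inner \<Rightarrow> 'a"
  assumes "\<And>u v. cinner (A (S u)) v = cinner (A u) (S v)"
  shows "cinner (A ((S ^^ n) u)) v = cinner (A u) ((S ^^ n) v)"
proof (induction n arbitrary: v)
  case (Suc n)
  have "cinner (A ((S ^^ Suc n) u)) v = cinner (A ((S ^^ n) u)) (S v)"
    by (simp add: assms)
  also have "\<dots> = cinner (A u) ((S ^^ Suc n) v)"
    by (simp add: Suc.IH funpow_Suc_right del: funpow.simps)
  finally show ?case .
qed simp

lemma A_selfadjoint_A_norm_funpow_power2_le:
  fixes A S :: "'a::complex_inner \<Rightarrow> 'a"
  assumes A: "positive_op A" and sym: "\<And>u v. cinner (A (S u)) v = cinner (A u) (S v)"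
  shows "(A_norm A ((S ^^ m) x))\<^sup>2 \<le> A_norm A x * A_norm A ((S ^^ (2 * m)) x)"
proof -
  have "(A_norm A ((S ^^ m) x))\<^sup>2 = Re (A_inner A x ((S ^^ (2 * m)) x))"
    by (simp add: A_norm_power2[OF A] A_inner_def A_selfadjoint_funpow[of A S, OF sym] mult_2
        funpow_add)
  also have "\<dots> \<le> cmod (A_inner A x ((S ^^ (2 * m)) x))"
    by (rule complex_Re_le_cmod)
  also have "\<dots> \<le> A_norm A x * A_norm A ((S ^^ (2 * m)) x)"
    by (rule A_inner_cauchy_schwarz[OF A])
  finally show ?thesis .
qed

lemma A_selfadjoint_A_norm_ratio_power_le:
  fixes A S :: "'a::complex_inner \<Rightarrow> 'a"
  assumes A: "positive_op A" and sym: "\<And>u v. cinner (A (S u)) v = cinner (A u) (S v)"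
    and pos: "A_norm A x > 0"
  shows "(A_norm A (S x) / A_norm A x) ^ (2 ^ n) \<le> A_norm A ((S ^^ (2 ^ n)) x) / A_norm A x"
proof (induction n)
  case (Suc n)
  have "(A_norm A (S x) / A_norm A x) ^ (2 ^ Suc n) = ((A_norm A (S x) / A_norm A x) ^ (2 ^ n))\<^sup>2"
    by (simp add: power_mult[symmetric] mult.commute)
  also have "\<dots> \<le> (A_norm A ((S ^^ (2 ^ n)) x) / A_norm A x)\<^sup>2"
    using Suc.IH pos A_norm_nonneg[OF A] by (intro power_mono) auto
  also have "\<dots> \<le> A_norm A x * A_norm A ((S ^^ (2 * 2 ^ n)) x) / (A_norm A x)\<^sup>2"
    unfolding power_divide
    by (intro divide_right_mono A_selfadjoint_A_norm_funpow_power2_le[of A S, OF A sym]) simp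
  also have "\<dots> = A_norm A ((S ^^ (2 ^ Suc n)) x) / A_norm A x"
    using pos by (simp add: power2_eq_square)
  finally show ?case .
qed simp

lemma A_selfadjoint_A_norm_le:
  fixes A S :: "'a::complex_inner \<Rightarrow> 'a"
  assumes A: "positive_op A" and sym: "\<And>u v. cinner (A (S u)) v = cinner (A u) (S v)"
    and bound: "\<And>x. norm (S x) \<le> L * norm x" and "0 \<le> L"
  shows "A_norm A (S x) \<le> L * A_norm A x"
proof (cases "A_norm A x = 0")
  case True
  then have "(A_norm A (S x))\<^sup>2 \<le> 0"
    using A_selfadjoint_A_norm_funpow_power2_le[of A S, OF A sym, of 1 x] by simp
  then show ?thesis
    using True by simp
next
  case False
  then have pos: "A_norm A x > 0"
    using A_norm_nonneg[OF A, of x] by simp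
  obtain K where "K \<ge> 0" and K: "\<And>u. A_norm A u \<le> K * norm u"
    using A_norm_le_norm[OF A] by blast
  have "(A_norm A (S x) / A_norm A x) ^ (2 ^ n) \<le> (K * norm x / A_norm A x) * L ^ (2 ^ n)" for n
  proof -
    have "A_norm A ((S ^^ 2 ^ n) x) \<le> K * (L ^ (2 ^ n) * norm x)"
      using K order_trans mult_left_mono[OF norm_funpow_le[OF bound \<open>0 \<le> L\<close>] \<open>K \<ge> 0\<close>]
      by blast
    then have "A_norm A ((S ^^ 2 ^ n) x) / A_norm A x \<le> (K * norm x / A_norm A x) * L ^ (2 ^ n)"
      using pos by (simp add: divide_right_mono ac_simps)
    then show ?thesis
      using A_selfadjoint_A_norm_ratio_power_le[of A S, OF A sym pos, of n] by linarith
  qed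
  then have "A_norm A (S x) / A_norm A x \<le> L"
    by (rule le_if_power_two_pow_le_const_mult) (use A_norm_nonneg[OF A] \<open>0 \<le> L\<close> in simp_all)
  then show ?thesis
    using pos by (simp add: divide_le_eq)
qed

lemma A_selfadjoint_if_represents_A_inner:
  fixes A S T :: "'a::complex_inner \<Rightarrow> 'a"
  assumes A: "positive_op A" and S: "\<And>u v. cinner (A (S u)) v = cinner (A (T u)) (T v)"
  shows "cinner (A (S u)) v = cinner (A u) (S v)"
proof -
  have "cinner (A u) (S v) = cnj (cinner (A (S v)) u)"
    by (subst cinner_commute) (simp add: positive_op_hermitian[OF A])
  also have "\<dots> = cnj (cinner (T v) (A (T u)))"
    by (subst S) (simp add: positive_op_hermitian[OF A])
  also have "\<dots> = cinner (A (S u)) v"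
    by (subst cinner_commute) (simp add: S)
  finally show ?thesis ..
qed

lemma A_norm_le_if_represents_A_inner:
  fixes A S T :: "'a::complex_inner \<Rightarrow> 'a"
  assumes A: "positive_op A" and S: "cinner (A (S x)) x = cinner (A (T x)) (T x)"
    and bound: "A_norm A (S x) \<le> M * A_norm A x" and "0 \<le> M"
  shows "A_norm A (T x) \<le> sqrt M * A_norm A x"
proof -
  have "(A_norm A (T x))\<^sup>2 = Re (A_inner A (S x) x)"
    by (simp only: A_norm_power2[OF A] A_inner_def S)
  also have "\<dots> \<le> A_norm A (S x) * A_norm A x"
    by (rule order_trans[OF complex_Re_le_cmod A_inner_cauchy_schwarz[OF A]])
  also have "\<dots> \<le> M * A_norm A x * A_norm A x"
    using bound A_norm_nonneg[OF A] by (rule mult_right_mono)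
  also have "\<dots> = (sqrt M * A_norm A x)\<^sup>2"
    using \<open>0 \<le> M\<close> by (simp add: power_mult_distrib power2_eq_square)
  finally show ?thesis
    by (rule power2_le_imp_le) (use A_norm_nonneg[OF A, of x] \<open>0 \<le> M\<close> in simp)
qed

lemma BA_A_bounded:
  fixes A T :: "'a::chilbert_space \<Rightarrow> 'a"
  assumes A: "positive_op A" and T: "T \<in> BA A"
  shows "A_bounded A T"
proof -
  have TL: "bounded_clinear T"
    using T by (rule BA_bounded_clinear)
  obtain K C where "K \<ge> 0" and AC: "\<And>y. A (C y) = adjoint T (A y)"
    and C: "\<And>y. norm (C y) \<le> K * norm y"
    using douglas_factorization[OF A T] by blast
  obtain KT where "KT > 0" and KT: "\<And>x. norm (T x) \<le> norm x * KT"
    using bounded_clinear_pos_bound[OF TL] by blast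
  \<comment> \<open>\<open>C\<close> acts as the \<open>A\<close>-adjoint of \<open>T\<close>, so \<open>S = C T\<close> represents \<open>(u, v) \<mapsto> \<langle>T u, T v\<rangle>\<^sub>A\<close>.\<close>
  define S where "S x = C (T x)" for x
  have S: "cinner (A (S u)) v = cinner (A (T u)) (T v)" for u v
  proof -
    have "cinner (A (S u)) v = cnj (cinner v (adjoint T (A (T u))))"
      by (subst cinner_commute) (simp add: S_def AC)
    also have "\<dots> = cinner (A (T u)) (T v)"
      by (subst cinner_commute) (simp add: cinner_adjoint[OF TL])
    finally show ?thesis .
  qed
  have bound: "norm (S x) \<le> (K * KT) * norm x" for x
    using order_trans[OF C mult_left_mono[OF KT \<open>K \<ge> 0\<close>]] by (simp add: S_def ac_simps)
  have "A_norm A (S x) \<le> (K * KT) * A_norm A x" for x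
    using A_selfadjoint_A_norm_le[of A S "K * KT",
        OF A A_selfadjoint_if_represents_A_inner[of A S T, OF A S] bound] \<open>K \<ge> 0\<close> \<open>KT > 0\<close>
    by simp
  then have "A_norm A (T x) \<le> sqrt (K * KT) * A_norm A x" for x
    using A_norm_le_if_represents_A_inner[of A S x T "K * KT", OF A S] \<open>K \<ge> 0\<close> \<open>KT > 0\<close>
    by simp
  then show ?thesis
    unfolding A_bounded_def using \<open>K \<ge> 0\<close> \<open>KT > 0\<close> by (intro exI[of _ "sqrt (K * KT)"]) simp
qed

section \<open>Numerical radii and the block operator\<close>

lemma A_norm_scaleR:
  assumes A: "positive_op A"
  shows "A_norm A (r *\<^sub>R x) = \<bar>r\<bar> * A_norm A x"
proof -
  have "Re (A_inner A (r *\<^sub>R x) (r *\<^sub>R x)) = r\<^sup>2 * Re (A_inner A x x)"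
    by (simp add: A_inner_def bounded_clinear_scaleR[OF positive_op_bounded_clinear[OF A]]
        cinner_scaleR_left cinner_scaleR_right power2_eq_square)
  then show ?thesis
    by (simp add: A_norm_def real_sqrt_mult)
qed

lemma A_norm_eq_1_exists:
  assumes A: "positive_op A" and "A \<noteq> (\<lambda>x. 0)"
  shows "\<exists>x. A_norm A x = 1"
proof -
  obtain x0 where "A x0 \<noteq> 0"
    using assms(2) by auto
  then have "cinner (A x0) (A x0) \<noteq> 0"
    by (simp add: cinner_self_eq_zero)
  then have "A_norm A x0 \<noteq> 0"
    using A_inner_cauchy_schwarz[OF A, of x0 "A x0"] by (auto simp: A_inner_def)
  then have "A_norm A x0 > 0"
    using A_norm_nonneg[OF A, of x0] by simp
  then have "A_norm A ((1 / A_norm A x0) *\<^sub>R x0) = 1"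
    by (simp add: A_norm_scaleR[OF A])
  then show ?thesis
    by blast
qed

lemma omega_A_le:
  assumes "\<exists>x. A_norm A x = 1" and "\<And>x. A_norm A x = 1 \<Longrightarrow> cmod (A_inner A (T x) x) \<le> c"
  shows "omega_A A T \<le> c"
  unfolding omega_A_def using assms by (intro cSup_least) auto

lemma omega_AA_ge:
  assumes "bdd_above {cmod (AA_inner A (T z) z) | z. AA_norm A z = 1}" and "AA_norm A z = 1"
  shows "cmod (AA_inner A (T z) z) \<le> omega_AA A T"
  unfolding omega_AA_def using assms by (intro cSup_upper) blast+

lemma A_bounded_A_inner_bound:
  assumes A: "positive_op A" and "A_bounded A T"
  shows "\<exists>M. \<forall>u v. A_norm A u \<le> 1 \<longrightarrow> A_norm A v \<le> 1 \<longrightarrow> cmod (A_inner A (T u) v) \<le> M"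
proof -
  obtain M where "M \<ge> 0" and M: "\<And>x. A_norm A (T x) \<le> M * A_norm A x"
    using assms(2) unfolding A_bounded_def by blast
  have "cmod (A_inner A (T u) v) \<le> M" if "A_norm A u \<le> 1" "A_norm A v \<le> 1" for u v
  proof -
    have "cmod (A_inner A (T u) v) \<le> A_norm A (T u) * A_norm A v"
      by (rule A_inner_cauchy_schwarz[OF A])
    also have "\<dots> \<le> (M * A_norm A u) * 1"
      using M that A_norm_nonneg[OF A] \<open>M \<ge> 0\<close> by (intro mult_mono) auto
    also have "\<dots> \<le> M"
      using that \<open>M \<ge> 0\<close> by (simp add: mult_left_le)
    finally show ?thesis .
  qed
  then show ?thesis
    by blast
qed

lemma bdd_above_block_op:
  assumes A: "positive_op A"
    and "A_bounded A P" "A_bounded A Q" "A_bounded A R" "A_bounded A S"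
  shows "bdd_above {cmod (AA_inner A (block_op P Q R S z) z) | z. AA_norm A z = 1}"
proof -
  have AL: "bounded_clinear A"
    using A by (rule positive_op_bounded_clinear)
  obtain MP where MP: "\<forall>u v. A_norm A u \<le> 1 \<longrightarrow> A_norm A v \<le> 1 \<longrightarrow> cmod (A_inner A (P u) v) \<le> MP"
    using A_bounded_A_inner_bound[OF A assms(2)] by blast
  obtain MQ where MQ: "\<forall>u v. A_norm A u \<le> 1 \<longrightarrow> A_norm A v \<le> 1 \<longrightarrow> cmod (A_inner A (Q u) v) \<le> MQ"
    using A_bounded_A_inner_bound[OF A assms(3)] by blast
  obtain MR where MR: "\<forall>u v. A_norm A u \<le> 1 \<longrightarrow> A_norm A v \<le> 1 \<longrightarrow> cmod (A_inner A (R u) v) \<le> MR"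
    using A_bounded_A_inner_bound[OF A assms(4)] by blast
  obtain MS where MS: "\<forall>u v. A_norm A u \<le> 1 \<longrightarrow> A_norm A v \<le> 1 \<longrightarrow> cmod (A_inner A (S u) v) \<le> MS"
    using A_bounded_A_inner_bound[OF A assms(5)] by blast
  have triangle: "cmod (a + b + c + d) \<le> cmod a + cmod b + cmod c + cmod d" for a b c d :: complex
    using norm_triangle_ineq[of "a + b + c" d] norm_triangle_ineq[of "a + b" c]
      norm_triangle_ineq[of a b] by linarith
  show ?thesis
  proof (rule bdd_aboveI, safe)
    fix x1 x2
    assume "AA_norm A (x1, x2) = 1"
    then have sq: "(A_norm A x1)\<^sup>2 + (A_norm A x2)\<^sup>2 = 1"
      by (simp add: AA_norm_def AA_inner_def A_norm_power2[OF A])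
    then have "(A_norm A x1)\<^sup>2 \<le> 1" "(A_norm A x2)\<^sup>2 \<le> 1"
      using zero_le_power2[of "A_norm A x1"] zero_le_power2[of "A_norm A x2"] by linarith+
    then have n1: "A_norm A x1 \<le> 1" and n2: "A_norm A x2 \<le> 1"
      by (simp_all add: abs_square_le_1 abs_le_iff)
    have "AA_inner A (block_op P Q R S (x1, x2)) (x1, x2)
        = A_inner A (P x1) x1 + A_inner A (Q x2) x1 + A_inner A (R x1) x2 + A_inner A (S x2) x2"
      by (simp add: block_op_def AA_inner_def A_inner_def bounded_clinear_add[OF AL] cinner_add_left)
    then show "cmod (AA_inner A (block_op P Q R S (x1, x2)) (x1, x2)) \<le> MP + MQ + MR + MS"
      using triangle MP MQ MR MS n1 n2 by (smt (verit))
  qed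
qed

lemma AA_inner_block_op_diagonal:
  fixes A P Q R S :: "'a::complex_inner \<Rightarrow> 'a"
  assumes "bounded_clinear A" "bounded_clinear P" "bounded_clinear Q" "bounded_clinear R"
    "bounded_clinear S"
  shows "AA_inner A (block_op P Q R S (a *\<^sub>C x, b *\<^sub>C x)) (a *\<^sub>C x, b *\<^sub>C x)
    = (a * cnj a) * A_inner A (P x) x + (b * cnj a) * A_inner A (Q x) x
      + (a * cnj b) * A_inner A (R x) x + (b * cnj b) * A_inner A (S x) x"
  using assms
  by (simp add: AA_inner_def A_inner_def block_op_def bounded_clinear_add bounded_clinear_scaleC
      cinner_add_left cinner_scaleC_left cinner_scaleC_right algebra_simps)

lemma block_op_diagonal_vector:
  fixes A P Q R S :: "'a::complex_inner \<Rightarrow> 'a" and x :: 'a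
  assumes lin: "bounded_clinear A" "bounded_clinear P" "bounded_clinear Q" "bounded_clinear R"
      "bounded_clinear S"
    and e: "cmod e = 1"
  defines "c \<equiv> complex_of_real (sqrt (1/2))"
  shows "AA_inner A (block_op P Q R S (c *\<^sub>C x, (c * e) *\<^sub>C x)) (c *\<^sub>C x, (c * e) *\<^sub>C x)
      = (1/2) * A_inner A (P x + e *\<^sub>C Q x + cnj e *\<^sub>C R x + S x) x"
    and "AA_norm A (c *\<^sub>C x, (c * e) *\<^sub>C x) = A_norm A x"
proof -
  have cc: "c * cnj c = 1/2"
    unfolding c_def by (simp flip: of_real_mult)
  have "e * cnj e = 1"
    using complex_norm_square[of e] e by simp
  then have ce: "(c * e) * cnj c = e / 2" "c * cnj (c * e) = cnj e / 2" "(c * e) * cnj (c * e) = 1/2"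
    using cc by (simp_all add: algebra_simps)
  show "AA_inner A (block_op P Q R S (c *\<^sub>C x, (c * e) *\<^sub>C x)) (c *\<^sub>C x, (c * e) *\<^sub>C x)
      = (1/2) * A_inner A (P x + e *\<^sub>C Q x + cnj e *\<^sub>C R x + S x) x"
    unfolding AA_inner_block_op_diagonal[OF lin] cc ce using lin(1)
    by (simp add: A_inner_def bounded_clinear_add bounded_clinear_scaleC cinner_add_left
        cinner_scaleC_left algebra_simps)
  have "AA_inner A (c *\<^sub>C x, (c * e) *\<^sub>C x) (c *\<^sub>C x, (c * e) *\<^sub>C x)
      = (c * cnj c) * A_inner A x x + ((c * e) * cnj (c * e)) * A_inner A x x"
    using lin(1) by (simp add: AA_inner_def A_inner_def bounded_clinear_scaleC cinner_scaleC_left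
        cinner_scaleC_right mult.assoc)
  then show "AA_norm A (c *\<^sub>C x, (c * e) *\<^sub>C x) = A_norm A x"
    unfolding cc ce by (simp add: AA_norm_def A_norm_def)
qed

lemma omega_A_le_omega_AA_block_op:
  fixes A P Q R S T :: "'a::complex_inner \<Rightarrow> 'a"
  assumes A: "positive_op A" and unit: "\<exists>x. A_norm A x = 1"
    and bdd: "bdd_above {cmod (AA_inner A (block_op P Q R S z) z) | z. AA_norm A z = 1}"
    and lin: "bounded_clinear P" "bounded_clinear Q" "bounded_clinear R" "bounded_clinear S"
    and "cmod a = 1" "cmod e = 1"
    and T: "\<And>x. T x = a *\<^sub>C (P x + e *\<^sub>C Q x + cnj e *\<^sub>C R x + S x)"
  shows "omega_A A T \<le> 2 * omega_AA A (block_op P Q R S)"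
proof (rule omega_A_le[OF unit])
  fix x
  assume "A_norm A x = 1"
  define c where "c = complex_of_real (sqrt (1/2))"
  note diagonal = block_op_diagonal_vector[OF positive_op_bounded_clinear[OF A] lin \<open>cmod e = 1\<close>,
      folded c_def, of x]
  have "cmod (A_inner A (T x) x) = cmod (A_inner A (P x + e *\<^sub>C Q x + cnj e *\<^sub>C R x + S x) x)"
    using \<open>cmod a = 1\<close>
    by (simp add: T A_inner_def bounded_clinear_scaleC[OF positive_op_bounded_clinear[OF A]]
        cinner_scaleC_left norm_mult)
  also have "\<dots> = 2 * cmod (AA_inner A (block_op P Q R S (c *\<^sub>C x, (c * e) *\<^sub>C x))
      (c *\<^sub>C x, (c * e) *\<^sub>C x))"
    by (simp add: diagonal(1) norm_mult)
  also have "\<dots> \<le> 2 * omega_AA A (block_op P Q R S)"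
    using omega_AA_ge[OF bdd] diagonal(2) \<open>A_norm A x = 1\<close> by simp
  finally show "cmod (A_inner A (T x) x) \<le> 2 * omega_AA A (block_op P Q R S)" .
qed

theorem theorem2p22:
  fixes A P Q R S :: "'a::chilbert_space \<Rightarrow> 'a"
  assumes "positive_op A" and "A \<noteq> (\<lambda>x. 0)"
    and "P \<in> BA A" and "Q \<in> BA A" and "R \<in> BA A" and "S \<in> BA A"
  defines "\<mu> \<equiv> max (omega_A A (\<lambda>x. Q x + R x + S x + P x))
                    (omega_A A (\<lambda>x. Q x + R x - S x - P x))"
    and "\<nu> \<equiv> max (omega_A A (\<lambda>x. Q x - R x + \<i> *\<^sub>C (S x + P x)))
                  (omega_A A (\<lambda>x. Q x - R x - \<i> *\<^sub>C (S x + P x)))"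
  shows "omega_AA A (block_op P Q R S) \<ge> (1/2) * max \<mu> \<nu>"
proof -
  note A = assms(1)
  note lin = assms(3-6)[THEN BA_bounded_clinear]
  note twisted = omega_A_le_omega_AA_block_op[OF A A_norm_eq_1_exists[OF A assms(2)]
      bdd_above_block_op[OF A assms(3-6)[THEN BA_A_bounded[OF A]]] lin]
  have "omega_A A (\<lambda>x. Q x + R x + S x + P x) \<le> 2 * omega_AA A (block_op P Q R S)"
    by (rule twisted[where a = 1 and e = 1]) (simp_all add: scaleC_one algebra_simps)
  moreover have "omega_A A (\<lambda>x. Q x + R x - S x - P x) \<le> 2 * omega_AA A (block_op P Q R S)"
    by (rule twisted[where a = "-1" and e = "-1"])
      (simp_all add: scaleC_one scaleC_minus_left algebra_simps)
  moreover have "omega_A A (\<lambda>x. Q x - R x + \<i> *\<^sub>C (S x + P x)) \<le> 2 * omega_AA A (block_op P Q R S)"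
    by (rule twisted[where a = "\<i>" and e = "-\<i>"])
      (simp_all add: scaleC_one scaleC_minus_left scaleC_minus_right scaleC_add_right scaleC_scaleC
        scaleC_diff_right algebra_simps)
  moreover have "omega_A A (\<lambda>x. Q x - R x - \<i> *\<^sub>C (S x + P x)) \<le> 2 * omega_AA A (block_op P Q R S)"
    by (rule twisted[where a = "-\<i>" and e = "\<i>"])
      (simp_all add: scaleC_one scaleC_minus_left scaleC_minus_right scaleC_add_right scaleC_scaleC
        scaleC_diff_right algebra_simps)
  ultimately show ?thesis
    unfolding \<mu>_def \<nu>_def by simp
qed

end
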